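(* Let $G$ be a symmetrically factorizable Lie group with subgroups $G_\pm$ and conjugating element $\theta$. If $\theta^2$ admits a unique factorization $\theta^2=(\theta^2)_+(\theta^2)_-^{-1}$ with $(\theta^2)_\pm\in G_\pm$, then $\tilde\theta:=(\theta^2)_+^{-1}\theta$ is also a conjugating element and it is unipotent.
   Context: A Lie group $G$ with Lie algebra $\mathfrak g$ is symmetrically factorizable if $\mathfrak g=\mathfrak g_+\oplus\mathfrak g_-$ as a vector space, where $\mathfrak g_\pm$ are Lie subalgebras, and there is an element $\theta\in G$ (a conjugating element) with $\theta G_-=G_+\theta$, where $G_\pm$ are the Lie subgroups corresponding to $\mathfrak g_\pm$. For $g$ in an open dense neighbourhood of the identity one writes $g=g_+g_-^{-1}$ with $g_\pm\in G_\pm$. Here ``$\tilde\theta$ is unipotent'' is used in the sense $\tilde\theta^2=1$. *)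

theory Defs
  imports "HOL-Algebra.Coset"
begin

definition conjugating_element :: "('a, 'b) monoid_scheme \<Rightarrow> 'a set \<Rightarrow> 'a set \<Rightarrow> 'a \<Rightarrow> bool" where
  "conjugating_element G Gp Gm t \<longleftrightarrow>
     t \<in> carrier G \<and> t <#\<^bsub>G\<^esub> Gm = Gp #>\<^bsub>G\<^esub> t"

definition sym_factorizable :: "('a, 'b) monoid_scheme \<Rightarrow> 'a set \<Rightarrow> 'a set \<Rightarrow> 'a \<Rightarrow> bool" where
  "sym_factorizable G Gp Gm \<theta> \<longleftrightarrow>
     group G \<and> subgroup Gp G \<and> subgroup Gm G \<and> conjugating_element G Gp Gm \<theta>"

end

theory Submission
  imports Defs
begin

text \<open>Left-multiplying a conjugating element by an element of \<open>G\<^sub>+\<close> keeps it conjugating,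
  because \<open>G\<^sub>+\<close> absorbs the factor on both sides of \<open>\<theta> G\<^sub>- = G\<^sub>+ \<theta>\<close>. For
  \<open>\<tilde>\<theta> = p\<^sup>-\<^sup>1 \<theta>\<close> one computes \<open>\<tilde>\<theta> p \<tilde>\<theta> = p\<^sup>-\<^sup>1 \<theta>\<^sup>2 = m\<^sup>-\<^sup>1\<close>; since \<open>\<tilde>\<theta>\<^sup>-\<^sup>1 p \<tilde>\<theta> \<in> G\<^sub>-\<close>, this
  puts \<open>\<tilde>\<theta>\<^sup>2\<close> in \<open>G\<^sub>-\<close>, and as \<open>\<tilde>\<theta>\<^sup>2\<close> commutes with \<open>\<tilde>\<theta>\<close>, conjugating by \<open>\<tilde>\<theta>\<close> puts it in \<open>G\<^sub>+\<close>
  as well. Uniqueness of the factorization of \<open>\<theta>\<^sup>2\<close> forces \<open>G\<^sub>+ \<inter> G\<^sub>- = {1}\<close>, so \<open>\<tilde>\<theta>\<^sup>2 = 1\<close>.\<close>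

lemma (in group) conjugating_element_conj_mem_plus:
  assumes "conjugating_element G Gp Gm t" and "subgroup Gp G" and "x \<in> Gm"
  shows "t \<otimes> x \<otimes> inv t \<in> Gp"
proof -
  have t: "t \<in> carrier G" and coset_eq: "t <# Gm = Gp #> t"
    using assms(1) by (auto simp: conjugating_element_def)
  have "t \<otimes> x \<in> Gp #> t"
    using assms(3) coset_eq by (auto simp: l_coset_def)
  then obtain y where y: "y \<in> Gp" "t \<otimes> x = y \<otimes> t"
    by (auto simp: r_coset_def)
  have "y \<in> carrier G"
    using y(1) assms(2) by (rule subgroup.mem_carrier[rotated])
  then have "t \<otimes> x \<otimes> inv t = y"
    using y(2) t by (simp add: m_assoc)
  with y(1) show ?thesis by simp
qed

lemma (in group) conjugating_element_conj_mem_minus: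
  assumes "conjugating_element G Gp Gm t"
    and "subgroup Gp G" and "subgroup Gm G" and "y \<in> Gp"
  shows "inv t \<otimes> y \<otimes> t \<in> Gm"
proof -
  have t: "t \<in> carrier G" and coset_eq: "t <# Gm = Gp #> t"
    using assms(1) by (auto simp: conjugating_element_def)
  have "y \<otimes> t \<in> t <# Gm"
    using assms(4) coset_eq by (auto simp: r_coset_def)
  then obtain x where x: "x \<in> Gm" "y \<otimes> t = t \<otimes> x"
    by (auto simp: l_coset_def)
  have "x \<in> carrier G" "y \<in> carrier G"
    using x(1) assms(2-4) by (auto dest: subgroup.mem_carrier)
  then have "inv t \<otimes> y \<otimes> t = x"
    using x(2) t by (simp add: m_assoc m_assoc[symmetric, of "inv t" t])
  with x(1) show ?thesis by simp
qed

lemma (in group) conjugating_element_mult_left: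
  assumes "conjugating_element G Gp Gm t"
    and "subgroup Gp G" and "Gm \<subseteq> carrier G" and "p \<in> Gp"
  shows "conjugating_element G Gp Gm (p \<otimes> t)"
proof -
  have t: "t \<in> carrier G" and coset_eq: "t <# Gm = Gp #> t"
    using assms(1) by (auto simp: conjugating_element_def)
  have p: "p \<in> carrier G" and Gp: "Gp \<subseteq> carrier G"
    using assms(2,4) by (auto dest: subgroup.subset)
  have "(p \<otimes> t) <# Gm = p <# (Gp #> t)"
    using assms(3) p t by (simp add: lcos_m_assoc[symmetric] coset_eq)
  also have "\<dots> = Gp #> t"
    using assms(2,4) p t Gp by (simp add: coset_assoc coset_join3)
  also have "\<dots> = Gp #> (p \<otimes> t)"
    using assms(2,4) p t Gp by (simp add: coset_mult_assoc[symmetric] coset_join2)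
  finally show ?thesis
    using p t by (simp add: conjugating_element_def)
qed

lemma (in group) unique_factorization_imp_trivial_inter:
  assumes "subgroup Gp G" and "subgroup Gm G"
    and unique: "\<exists>!pm. fst pm \<in> Gp \<and> snd pm \<in> Gm \<and> g = fst pm \<otimes> inv (snd pm)"
    and "p \<in> Gp" and "m \<in> Gm" and g: "g = p \<otimes> inv m"
  shows "Gp \<inter> Gm = {\<one>}"
proof -
  have "x = \<one>" if x: "x \<in> Gp" "x \<in> Gm" for x
  proof -
    have carrier: "p \<in> carrier G" "m \<in> carrier G" "x \<in> carrier G"
      using assms(1,2,4,5) x by (auto dest: subgroup.mem_carrier)
    have "g = (p \<otimes> x) \<otimes> inv (m \<otimes> x)"
      using g carrier by (simp add: inv_mult_group m_assoc m_assoc[symmetric, of x "inv x"])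
    moreover have "p \<otimes> x \<in> Gp" "m \<otimes> x \<in> Gm"
      using assms(1,2,4,5) x by (auto intro: subgroup.m_closed)
    ultimately have "(p \<otimes> x, m \<otimes> x) = (p, m)"
      using unique assms(4,5) g by (metis fst_conv snd_conv)
    then show "x = \<one>"
      using carrier by simp
  qed
  then show ?thesis
    using assms(1,2) by (auto intro: subgroup.one_closed)
qed

theorem mainTheorem5:
  fixes G (structure) and Gp Gm :: "'a set" and \<theta> p m :: 'a
  assumes "sym_factorizable G Gp Gm \<theta>"
    and "\<exists>!pm. fst pm \<in> Gp \<and> snd pm \<in> Gm \<and> \<theta> \<otimes> \<theta> = fst pm \<otimes> inv (snd pm)"
    and "p \<in> Gp" and "m \<in> Gm" and "\<theta> \<otimes> \<theta> = p \<otimes> inv m"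
  shows "conjugating_element G Gp Gm (inv p \<otimes> \<theta>)
         \<and> (inv p \<otimes> \<theta>) \<otimes> (inv p \<otimes> \<theta>) = \<one>"
proof -
  have "group G" and Gp: "subgroup Gp G" and Gm: "subgroup Gm G"
    and \<theta>: "conjugating_element G Gp Gm \<theta>"
    using assms(1) by (auto simp: sym_factorizable_def)
  interpret group G by fact
  define q where "q = inv p \<otimes> \<theta>"
  have carrier: "\<theta> \<in> carrier G" "p \<in> carrier G" "m \<in> carrier G" "q \<in> carrier G"
    using \<theta> Gp Gm assms(3,4) by (auto simp: q_def conjugating_element_def dest: subgroup.mem_carrier)
  have q: "conjugating_element G Gp Gm q"
    unfolding q_def using \<theta> Gp Gm assms(3)
    by (auto intro: conjugating_element_mult_left subgroup.m_inv_closed dest: subgroup.subset)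
  have "q \<otimes> q = (q \<otimes> p \<otimes> q) \<otimes> inv (inv q \<otimes> p \<otimes> q)"
    using carrier
    by (simp add: m_assoc inv_mult_group m_assoc[symmetric, of q "inv q"] m_assoc[symmetric, of p "inv p"])
  also have "q \<otimes> p \<otimes> q = inv m"
    using assms(5) carrier
    by (simp add: q_def m_assoc m_assoc[symmetric, of p "inv p"] m_assoc[symmetric, of "inv p" p])
  finally have in_minus: "q \<otimes> q \<in> Gm"
    using conjugating_element_conj_mem_minus[OF q Gp Gm assms(3)] assms(4) Gm
    by (simp add: subgroup.m_closed subgroup.m_inv_closed)
  have "q \<otimes> q = q \<otimes> (q \<otimes> q) \<otimes> inv q"
    using carrier by (simp add: m_assoc)
  then have "q \<otimes> q \<in> Gp"
    using conjugating_element_conj_mem_plus[OF q Gp in_minus] by simp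
  with in_minus have "q \<otimes> q = \<one>"
    using unique_factorization_imp_trivial_inter[OF Gp Gm assms(2-5)] by blast
  with q show ?thesis
    by (simp add: q_def)
qed

end
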